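(* Let $\beta>0$, $\mu_x,\mu_y\in\mathbb{R}$, and let $X\sim\mathrm{MaxGumbel}(\mu_x,\beta)$ and $Y\sim\mathrm{MinGumbel}(\mu_y,\beta)$ be independent. Then $$\mathbb{E}\big[\max(Y-X,0)\big]=2\beta\,K_0\!\left(2e^{-\frac{\mu_y-\mu_x}{2\beta}}\right),$$ where $K_0$ is the modified Bessel function of the second kind of order $0$.
   Context: $\mathrm{MaxGumbel}(\mu,\beta)$ denotes the distribution on $\mathbb{R}$ with density $\frac1\beta\exp\!\big(-\tfrac{x-\mu}{\beta}-e^{-(x-\mu)/\beta}\big)$; $\mathrm{MinGumbel}(\mu,\beta)$ denotes the distribution with density $\frac1\beta\exp\!\big(\tfrac{x-\mu}{\beta}-e^{(x-\mu)/\beta}\big)$ (the law of $-Z$ for $Z\sim\mathrm{MaxGumbel}(-\mu,\beta)$). $K_0(z)=\int_0^\infty e^{-z\cosh t}\,dt$ for $z>0$. *)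

theory Defs
  imports "HOL-Probability.Probability"
begin

definition max_gumbel_density :: "real \<Rightarrow> real \<Rightarrow> real \<Rightarrow> real" where
  "max_gumbel_density mu beta x = (1 / beta) * exp (- ((x - mu) / beta) - exp (- ((x - mu) / beta)))"

definition min_gumbel_density :: "real \<Rightarrow> real \<Rightarrow> real \<Rightarrow> real" where
  "min_gumbel_density mu beta x = (1 / beta) * exp ((x - mu) / beta - exp ((x - mu) / beta))"

definition besselK0 :: "real \<Rightarrow> real" where
  "besselK0 z = (LBINT t:{0..}. exp (- z * cosh t))"

end

theory Submission
  imports Defs
begin

text \<open>
  Since \<open>max (Y - X) 0\<close> is the length of the interval \<open>[X, Y]\<close>, Tonelli and independence give
  \<open>E[max (Y - X) 0] = \<integral> P(X \<le> t) P(t \<le> Y) dt\<close>. For the two Gumbel laws these tails are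
  \<open>exp (- exp (- (t - mu_x) / beta))\<close> and \<open>exp (- exp ((t - mu_y) / beta))\<close>; substituting
  \<open>t = (mu_x + mu_y) / 2 + beta * s\<close> turns their product into \<open>exp (- z * cosh s)\<close> with
  \<open>z = 2 * exp (- (mu_y - mu_x) / (2 * beta))\<close>, and by evenness of \<open>cosh\<close> the integral of
  that over the real line is \<open>2 * K0 z\<close>.
\<close>

lemma ennreal_max_diff_eq_nn_integral:
  "ennreal (max (b - a) 0) = (\<integral>\<^sup>+t. of_bool (a \<le> t \<and> t \<le> (b::real)) \<partial>lborel)"
proof -
  have "(\<integral>\<^sup>+t. of_bool (a \<le> t \<and> t \<le> b) \<partial>lborel) = (\<integral>\<^sup>+t. indicator {a..b} t \<partial>lborel)"
    by (intro nn_integral_cong) (auto simp: indicator_def)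
  then show ?thesis by (simp add: emeasure_lborel_Icc_eq max_def)
qed

lemma (in prob_space) nn_integral_max_diff_indep_var:
  assumes indep: "indep_var borel X borel Y"
  shows "(\<integral>\<^sup>+\<omega>. ennreal (max (Y \<omega> - X \<omega>) 0) \<partial>M)
       = (\<integral>\<^sup>+t. emeasure M (X -` {..t} \<inter> space M) * emeasure M (Y -` {t..} \<inter> space M) \<partial>lborel)"
proof -
  have [measurable]: "random_variable borel X" "random_variable borel Y"
    using indep by (auto dest: indep_var_rv1 indep_var_rv2)
  interpret pair_sigma_finite M lborel ..
  have "(\<integral>\<^sup>+\<omega>. ennreal (max (Y \<omega> - X \<omega>) 0) \<partial>M)
      = (\<integral>\<^sup>+\<omega>. \<integral>\<^sup>+t. of_bool (X \<omega> \<le> t \<and> t \<le> Y \<omega>) \<partial>lborel \<partial>M)"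
    by (simp only: ennreal_max_diff_eq_nn_integral)
  also have "\<dots> = (\<integral>\<^sup>+t. \<integral>\<^sup>+\<omega>. of_bool (X \<omega> \<le> t \<and> t \<le> Y \<omega>) \<partial>M \<partial>lborel)"
    by (rule Fubini'[symmetric]) measurable
  also have "\<dots> = (\<integral>\<^sup>+t. emeasure M (X -` {..t} \<inter> space M) * emeasure M (Y -` {t..} \<inter> space M) \<partial>lborel)"
  proof (rule nn_integral_cong)
    fix t :: real
    have "(\<integral>\<^sup>+\<omega>. of_bool (X \<omega> \<le> t \<and> t \<le> Y \<omega>) \<partial>M)
        = (\<integral>\<^sup>+\<omega>. indicator {\<omega>\<in>space M. X \<omega> \<in> {..t} \<and> Y \<omega> \<in> {t..}} \<omega> \<partial>M)"
      by (intro nn_integral_cong) (auto simp: indicator_def)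
    also have "\<dots> = emeasure M {\<omega>\<in>space M. X \<omega> \<in> {..t} \<and> Y \<omega> \<in> {t..}}"
      by (rule nn_integral_indicator) measurable
    also have "\<dots> = ennreal (\<P>(\<omega> in M. X \<omega> \<in> {..t}) * \<P>(\<omega> in M. Y \<omega> \<in> {t..}))"
      using prob_indep_random_variable[OF indep, of "{..t}" "{t..}"] by (simp add: emeasure_eq_measure)
    also have "\<dots> = emeasure M (X -` {..t} \<inter> space M) * emeasure M (Y -` {t..} \<inter> space M)"
      by (simp add: emeasure_eq_measure ennreal_mult vimage_def Int_def conj_commute)
    finally show "(\<integral>\<^sup>+\<omega>. of_bool (X \<omega> \<le> t \<and> t \<le> Y \<omega>) \<partial>M) = \<dots>" .
  qed
  finally show ?thesis .
qed

lemma nn_integral_even: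
  fixes f :: "real \<Rightarrow> ennreal"
  assumes [measurable]: "f \<in> borel_measurable borel" and even: "\<And>x. f (- x) = f x"
  shows "(\<integral>\<^sup>+x. f x \<partial>lborel) = 2 * (\<integral>\<^sup>+x\<in>{0..}. f x \<partial>lborel)"
proof -
  have "(\<integral>\<^sup>+x. f x \<partial>lborel) = (\<integral>\<^sup>+x. f x * indicator {0..} x + f x * indicator {..0} x \<partial>lborel)"
    by (intro nn_integral_cong_AE eventually_mono[OF AE_lborel_singleton[of 0]]) (auto simp: indicator_def)
  also have "\<dots> = (\<integral>\<^sup>+x\<in>{0..}. f x \<partial>lborel) + (\<integral>\<^sup>+x\<in>{..0}. f x \<partial>lborel)"
    by (rule nn_integral_add) measurable
  also have "(\<integral>\<^sup>+x\<in>{..0}. f x \<partial>lborel) = (\<integral>\<^sup>+x. f (- x) * indicator {..0} (- x) \<partial>lborel)"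
    using nn_integral_real_affine[of "\<lambda>x. f x * indicator {..0} x" "-1" 0] by simp
  also have "\<dots> = (\<integral>\<^sup>+x\<in>{0..}. f x \<partial>lborel)"
    by (intro nn_integral_cong) (auto simp: even indicator_def)
  finally show ?thesis by (simp add: mult_2)
qed

lemma nn_integral_min_gumbel_density_atLeast:
  assumes "beta > 0"
  shows "(\<integral>\<^sup>+y\<in>{t..}. ennreal (min_gumbel_density mu beta y) \<partial>lborel) = ennreal (exp (- exp ((t - mu) / beta)))"
proof -
  have "(\<integral>\<^sup>+y\<in>{t..}. ennreal (min_gumbel_density mu beta y) \<partial>lborel) = ennreal (0 - (- exp (- exp ((t - mu) / beta))))"
  proof (rule nn_integral_FTC_atLeast)
    show "min_gumbel_density mu beta \<in> borel_measurable borel"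
      unfolding min_gumbel_density_def by measurable
    fix y
    have "min_gumbel_density mu beta y = exp (- exp ((y - mu) / beta)) * (exp ((y - mu) / beta) / beta)"
      by (simp add: min_gumbel_density_def exp_diff exp_minus field_simps)
    then show "((\<lambda>y. - exp (- exp ((y - mu) / beta))) has_real_derivative min_gumbel_density mu beta y) (at y)"
      using assms by (auto intro!: derivative_eq_intros)
    show "0 \<le> min_gumbel_density mu beta y"
      using assms by (simp add: min_gumbel_density_def)
  next
    show "((\<lambda>y. - exp (- exp ((y - mu) / beta))) \<longlongrightarrow> 0) at_top"
      using assms by real_asymp
  qed
  then show ?thesis by simp
qed

lemma max_gumbel_density_eq_min_gumbel_density_uminus:
  "max_gumbel_density mu beta x = min_gumbel_density (- mu) beta (- x)"
  by (simp add: max_gumbel_density_def min_gumbel_density_def minus_divide_left)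

lemma nn_integral_max_gumbel_density_atMost:
  assumes "beta > 0"
  shows "(\<integral>\<^sup>+x\<in>{..t}. ennreal (max_gumbel_density mu beta x) \<partial>lborel) = ennreal (exp (- exp (- (t - mu) / beta)))"
proof -
  have "(\<integral>\<^sup>+x\<in>{..t}. ennreal (max_gumbel_density mu beta x) \<partial>lborel)
      = (\<integral>\<^sup>+x. ennreal (max_gumbel_density mu beta (- x)) * indicator {..t} (- x) \<partial>lborel)"
    using nn_integral_real_affine[of "\<lambda>x. ennreal (max_gumbel_density mu beta x) * indicator {..t} x" "-1" 0]
    by (simp add: max_gumbel_density_def)
  also have "\<dots> = (\<integral>\<^sup>+y\<in>{-t..}. ennreal (min_gumbel_density (- mu) beta y) \<partial>lborel)"
    by (intro nn_integral_cong) (auto simp: max_gumbel_density_eq_min_gumbel_density_uminus indicator_def)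
  also have "\<dots> = ennreal (exp (- exp (- (t - mu) / beta)))"
    using nn_integral_min_gumbel_density_atLeast[OF assms] by (simp add: minus_divide_left)
  finally show ?thesis .
qed

lemma nn_integral_gumbel_tails_product_eq_cosh:
  assumes "beta > 0"
  shows "(\<integral>\<^sup>+t. ennreal (exp (- exp (- (t - mu_x) / beta))) * ennreal (exp (- exp ((t - mu_y) / beta))) \<partial>lborel)
       = beta * (\<integral>\<^sup>+s. ennreal (exp (- (2 * exp (- (mu_y - mu_x) / (2 * beta))) * cosh s)) \<partial>lborel)"
proof -
  define d where "d = (mu_y - mu_x) / (2 * beta)"
  let ?m = "(mu_x + mu_y) / 2"
  have tails_at: "ennreal (exp (- exp (- (?m + beta * s - mu_x) / beta))) * ennreal (exp (- exp ((?m + beta * s - mu_y) / beta)))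
      = ennreal (exp (- (2 * exp (- d)) * cosh s))" for s
  proof -
    have "- (?m + beta * s - mu_x) / beta = - s - d" "(?m + beta * s - mu_y) / beta = s - d"
      using assms by (simp_all add: d_def field_simps)
    moreover have "exp (- s - d) + exp (s - d) = 2 * exp (- d) * cosh s"
      by (simp add: cosh_def exp_diff exp_minus field_simps)
    ultimately show ?thesis
      by (simp add: exp_add[symmetric] ennreal_mult[symmetric])
  qed
  have "(\<integral>\<^sup>+t. ennreal (exp (- exp (- (t - mu_x) / beta))) * ennreal (exp (- exp ((t - mu_y) / beta))) \<partial>lborel)
      = beta * (\<integral>\<^sup>+s. ennreal (exp (- exp (- (?m + beta * s - mu_x) / beta)))
                     * ennreal (exp (- exp ((?m + beta * s - mu_y) / beta))) \<partial>lborel)"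
    using assms by (subst nn_integral_real_affine[where c = beta and t = ?m]) auto
  also have "\<dots> = beta * (\<integral>\<^sup>+s. ennreal (exp (- (2 * exp (- d)) * cosh s)) \<partial>lborel)"
    by (simp only: tails_at)
  finally show ?thesis
    by (simp add: d_def minus_divide_left)
qed

lemma nn_integral_exp_neg_atLeast_0:
  assumes "w > (0::real)"
  shows "(\<integral>\<^sup>+s\<in>{0..}. ennreal (exp (- w * s)) \<partial>lborel) = ennreal (1 / w)"
proof -
  have "(\<integral>\<^sup>+s\<in>{0..}. ennreal (exp (- w * s)) \<partial>lborel) = ennreal (0 - (- exp (- w * 0) / w))"
  proof (rule nn_integral_FTC_atLeast)
    fix s :: real
    show "((\<lambda>s. - exp (- w * s) / w) has_real_derivative exp (- w * s)) (at s)"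
      using assms by (auto intro!: derivative_eq_intros simp: field_simps)
  next
    show "((\<lambda>s. - exp (- w * s) / w) \<longlongrightarrow> 0) at_top"
      using assms by real_asymp
  qed auto
  then show ?thesis by simp
qed

lemma besselK0_nonneg: "besselK0 z \<ge> 0"
  unfolding besselK0_def set_lebesgue_integral_def
  by (rule Bochner_Integration.integral_nonneg) (simp add: indicator_def)

lemma nn_integral_exp_neg_cosh_eq_besselK0:
  assumes "z > (0::real)"
  shows "(\<integral>\<^sup>+s\<in>{0..}. ennreal (exp (- z * cosh s)) \<partial>lborel) = ennreal (besselK0 z)"
proof -
  have [measurable]: "(\<lambda>s::real. exp (- z * cosh s)) \<in> borel_measurable borel"
    by (intro borel_measurable_continuous_onI continuous_intros)
  have "exp (- z * cosh s) \<le> exp (- (z / 2) * s)" for s :: real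
  proof -
    have "1 + s \<le> exp s" "0 < exp (- s)"
      by (rule exp_ge_add_one_self, simp)
    then have "s \<le> exp s + exp (- s)"
      by linarith
    then have "s / 2 \<le> cosh s"
      unfolding cosh_def by (simp add: divide_simps)
    then show ?thesis
      using assms by (simp add: mult_left_mono)
  qed
  then have "(\<integral>\<^sup>+s\<in>{0..}. ennreal (exp (- z * cosh s)) \<partial>lborel) \<le> (\<integral>\<^sup>+s\<in>{0..}. ennreal (exp (- (z / 2) * s)) \<partial>lborel)"
    by (intro nn_integral_mono mult_right_mono ennreal_leI) auto
  also have "\<dots> < \<infinity>"
    using assms nn_integral_exp_neg_atLeast_0[of "z / 2"] by simp
  finally have "set_integrable lborel {0..} (\<lambda>s. exp (- z * cosh s))"
    unfolding set_integrable_def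
    by (intro integrableI_nonneg) (measurable, auto simp: indicator_mult_ennreal mult.commute)
  then show ?thesis
    unfolding besselK0_def set_lebesgue_integral_def set_integrable_def
    by (subst nn_integral_eq_integral[symmetric]) (auto simp: indicator_mult_ennreal mult.commute)
qed

theorem mainTheorem2:
  fixes M :: "'a measure" and X Y :: "'a \<Rightarrow> real"
    and beta mu_x mu_y :: real
  assumes "prob_space M"
    and "beta > 0"
    and "distributed M lborel X (\<lambda>x. ennreal (max_gumbel_density mu_x beta x))"
    and "distributed M lborel Y (\<lambda>y. ennreal (min_gumbel_density mu_y beta y))"
    and "prob_space.indep_var M borel X borel Y"
  shows "integrable M (\<lambda>\<omega>. max (Y \<omega> - X \<omega>) 0) \<and>
         (\<integral>\<omega>. max (Y \<omega> - X \<omega>) 0 \<partial>M)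
           = 2 * beta * besselK0 (2 * exp (- (mu_y - mu_x) / (2 * beta)))"
proof -
  interpret prob_space M by fact
  define z where "z = 2 * exp (- (mu_y - mu_x) / (2 * beta))"
  have "z > 0"
    by (simp add: z_def)
  have [measurable]: "random_variable borel X" "random_variable borel Y"
    using assms(5) by (auto dest: indep_var_rv1 indep_var_rv2)
  have cdf_X: "emeasure M (X -` {..t} \<inter> space M) = ennreal (exp (- exp (- (t - mu_x) / beta)))" for t
    using distributed_emeasure[OF assms(3)] nn_integral_max_gumbel_density_atMost[OF assms(2)] by simp
  have survival_Y: "emeasure M (Y -` {t..} \<inter> space M) = ennreal (exp (- exp ((t - mu_y) / beta)))" for t
    using distributed_emeasure[OF assms(4)] nn_integral_min_gumbel_density_atLeast[OF assms(2)] by simp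
  have "(\<integral>\<^sup>+\<omega>. ennreal (max (Y \<omega> - X \<omega>) 0) \<partial>M)
      = (\<integral>\<^sup>+t. emeasure M (X -` {..t} \<inter> space M) * emeasure M (Y -` {t..} \<inter> space M) \<partial>lborel)"
    using assms(5) by (rule nn_integral_max_diff_indep_var)
  also have "\<dots> = beta * (\<integral>\<^sup>+s. ennreal (exp (- z * cosh s)) \<partial>lborel)"
    unfolding cdf_X survival_Y z_def by (rule nn_integral_gumbel_tails_product_eq_cosh[OF assms(2)])
  also have "(\<integral>\<^sup>+s. ennreal (exp (- z * cosh s)) \<partial>lborel) = 2 * (\<integral>\<^sup>+s\<in>{0..}. ennreal (exp (- z * cosh s)) \<partial>lborel)"
    by (rule nn_integral_even) (auto intro!: borel_measurable_continuous_onI continuous_intros)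
  also have "\<dots> = 2 * ennreal (besselK0 z)"
    by (simp only: nn_integral_exp_neg_cosh_eq_besselK0[OF \<open>z > 0\<close>])
  finally have "(\<integral>\<^sup>+\<omega>. ennreal (max (Y \<omega> - X \<omega>) 0) \<partial>M) = ennreal (2 * beta * besselK0 z)"
    using assms(2) besselK0_nonneg[of z] by (simp add: ennreal_mult mult_ac)
  then show ?thesis
    using assms(2) besselK0_nonneg[of z] by (subst (asm) nn_integral_eq_integrable) (auto simp: z_def)
qed

end
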